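(* Let $M$ be a quasi-pseudo principally injective right $R$-module. Then $M$ is continuous if and only if $M$ is quasi-continuous.
   Context: All rings are associative with identity and all modules are unitary right $R$-modules. A submodule $N$ of $M$ is called $M$-cyclic if $N\cong M/L$ for some submodule $L$ of $M$ (equivalently, $N$ is the image of an endomorphism of $M$). $M$ is quasi-pseudo principally injective if for every $M$-cyclic submodule $A$ of $M$, every $R$-monomorphism $A\to M$ extends to an $R$-endomorphism of $M$. Conditions: (C$_1$) every submodule of $M$ is essential in a direct summand of $M$; (C$_2$) every submodule of $M$ isomorphic to a direct summand of $M$ is itself a direct summand of $M$; (C$_3$) if $A,B$ are direct summands of $M$ with $A\cap B=0$ then $A\oplus B$ is a direct summand of $M$. $M$ is continuous if it satisfies (C$_1$) and (C$_2$), and quasi-continuous if it satisfies (C$_1$) and (C$_3$). *)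

theory Defs
  imports "HOL-Algebra.Module"
begin

text \<open>We reuse the HOL-Algebra record type of modules; the right action x*r is written
  smult M r x.  Only the additive and scalar fields of M are used.\<close>

definition right_module :: "('a, 'c) ring_scheme \<Rightarrow> ('a, 'm) module \<Rightarrow> bool" where
  "right_module R M \<longleftrightarrow> ring R \<and> abelian_group M \<and>
     (\<forall>r\<in>carrier R. \<forall>x\<in>carrier M. smult M r x \<in> carrier M) \<and>
     (\<forall>r\<in>carrier R. \<forall>x\<in>carrier M. \<forall>y\<in>carrier M.
         smult M r (x \<oplus>\<^bsub>M\<^esub> y) = smult M r x \<oplus>\<^bsub>M\<^esub> smult M r y) \<and>
     (\<forall>r\<in>carrier R. \<forall>s\<in>carrier R. \<forall>x\<in>carrier M.
         smult M (r \<oplus>\<^bsub>R\<^esub> s) x = smult M r x \<oplus>\<^bsub>M\<^esub> smult M s x) \<and>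
     (\<forall>r\<in>carrier R. \<forall>s\<in>carrier R. \<forall>x\<in>carrier M.
         smult M s (smult M r x) = smult M (r \<otimes>\<^bsub>R\<^esub> s) x) \<and>
     (\<forall>x\<in>carrier M. smult M \<one>\<^bsub>R\<^esub> x = x)"

definition is_submodule :: "('a, 'c) ring_scheme \<Rightarrow> ('a, 'm) module \<Rightarrow> 'm set \<Rightarrow> bool" where
  "is_submodule R M N \<longleftrightarrow> N \<subseteq> carrier M \<and> \<zero>\<^bsub>M\<^esub> \<in> N \<and>
     (\<forall>x\<in>N. \<forall>y\<in>N. x \<oplus>\<^bsub>M\<^esub> y \<in> N) \<and>
     (\<forall>x\<in>N. \<ominus>\<^bsub>M\<^esub> x \<in> N) \<and>
     (\<forall>r\<in>carrier R. \<forall>x\<in>N. smult M r x \<in> N)"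

definition linear_on :: "('a, 'c) ring_scheme \<Rightarrow> ('a, 'm) module \<Rightarrow> 'm set \<Rightarrow> ('m \<Rightarrow> 'm) \<Rightarrow> bool" where
  "linear_on R M A f \<longleftrightarrow> (\<forall>x\<in>A. f x \<in> carrier M) \<and>
     (\<forall>x\<in>A. \<forall>y\<in>A. f (x \<oplus>\<^bsub>M\<^esub> y) = f x \<oplus>\<^bsub>M\<^esub> f y) \<and>
     (\<forall>r\<in>carrier R. \<forall>x\<in>A. f (smult M r x) = smult M r (f x))"

definition endomorphism :: "('a, 'c) ring_scheme \<Rightarrow> ('a, 'm) module \<Rightarrow> ('m \<Rightarrow> 'm) \<Rightarrow> bool" where
  "endomorphism R M f \<longleftrightarrow> linear_on R M (carrier M) f"

definition iso_submodules :: "('a, 'c) ring_scheme \<Rightarrow> ('a, 'm) module \<Rightarrow> 'm set \<Rightarrow> 'm set \<Rightarrow> bool" where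
  "iso_submodules R M A B \<longleftrightarrow> (\<exists>f. linear_on R M A f \<and> bij_betw f A B)"

text \<open>N is M-cyclic: N is isomorphic to a factor module M/L, i.e. N is the image of an
  endomorphism of M.\<close>
definition M_cyclic :: "('a, 'c) ring_scheme \<Rightarrow> ('a, 'm) module \<Rightarrow> 'm set \<Rightarrow> bool" where
  "M_cyclic R M N \<longleftrightarrow> is_submodule R M N \<and> (\<exists>f. endomorphism R M f \<and> f ` carrier M = N)"

definition msum :: "('a, 'm) module \<Rightarrow> 'm set \<Rightarrow> 'm set \<Rightarrow> 'm set" where
  "msum M A B = {a \<oplus>\<^bsub>M\<^esub> b | a b. a \<in> A \<and> b \<in> B}"

definition direct_summand :: "('a, 'c) ring_scheme \<Rightarrow> ('a, 'm) module \<Rightarrow> 'm set \<Rightarrow> bool" where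
  "direct_summand R M A \<longleftrightarrow> is_submodule R M A \<and>
     (\<exists>B. is_submodule R M B \<and> A \<inter> B = {\<zero>\<^bsub>M\<^esub>} \<and> msum M A B = carrier M)"

definition essential_in :: "('a, 'c) ring_scheme \<Rightarrow> ('a, 'm) module \<Rightarrow> 'm set \<Rightarrow> 'm set \<Rightarrow> bool" where
  "essential_in R M N K \<longleftrightarrow> is_submodule R M N \<and> is_submodule R M K \<and> N \<subseteq> K \<and>
     (\<forall>X. is_submodule R M X \<and> X \<subseteq> K \<and> X \<inter> N = {\<zero>\<^bsub>M\<^esub>} \<longrightarrow> X = {\<zero>\<^bsub>M\<^esub>})"

definition quasi_pseudo_principally_injective :: "('a, 'c) ring_scheme \<Rightarrow> ('a, 'm) module \<Rightarrow> bool" where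
  "quasi_pseudo_principally_injective R M \<longleftrightarrow>
     (\<forall>A f. M_cyclic R M A \<and> linear_on R M A f \<and> inj_on f A \<longrightarrow>
        (\<exists>g. endomorphism R M g \<and> (\<forall>x\<in>A. g x = f x)))"

definition C1 :: "('a, 'c) ring_scheme \<Rightarrow> ('a, 'm) module \<Rightarrow> bool" where
  "C1 R M \<longleftrightarrow> (\<forall>N. is_submodule R M N \<longrightarrow> (\<exists>K. direct_summand R M K \<and> essential_in R M N K))"

definition C2 :: "('a, 'c) ring_scheme \<Rightarrow> ('a, 'm) module \<Rightarrow> bool" where
  "C2 R M \<longleftrightarrow> (\<forall>A B. is_submodule R M A \<and> direct_summand R M B \<and> iso_submodules R M A B
      \<longrightarrow> direct_summand R M A)"

definition C3 :: "('a, 'c) ring_scheme \<Rightarrow> ('a, 'm) module \<Rightarrow> bool" where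
  "C3 R M \<longleftrightarrow> (\<forall>A B. direct_summand R M A \<and> direct_summand R M B \<and> A \<inter> B = {\<zero>\<^bsub>M\<^esub>}
      \<longrightarrow> direct_summand R M (msum M A B))"

definition continuous_module :: "('a, 'c) ring_scheme \<Rightarrow> ('a, 'm) module \<Rightarrow> bool" where
  "continuous_module R M \<longleftrightarrow> C1 R M \<and> C2 R M"

definition quasi_continuous_module :: "('a, 'c) ring_scheme \<Rightarrow> ('a, 'm) module \<Rightarrow> bool" where
  "quasi_continuous_module R M \<longleftrightarrow> C1 R M \<and> C3 R M"

end

theory Submission
  imports Defs
begin

text \<open>(C2) implies (C3) for every module: if \<open>M = A \<oplus> A'\<close> and \<open>B\<close> is a summand with
  \<open>A \<inter> B = 0\<close>, the projection \<open>p\<close> onto \<open>A'\<close> along \<open>A\<close> maps \<open>B\<close> isomorphically onto \<open>P \<subseteq> A'\<close>;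
  by (C2) \<open>M = P \<oplus> C\<close>, and then \<open>M = (A + B) \<oplus> (A' \<inter> C)\<close>.

  Conversely let \<open>M\<close> be quasi-pseudo principally injective with (C1), and let \<open>f : A \<rightarrow> B\<close> be an
  isomorphism onto a summand \<open>B\<close>. Summands are \<open>M\<close>-cyclic, so \<open>f\<^sup>-\<^sup>1\<close> extends to an endomorphism
  \<open>h\<close>; with \<open>\<pi>\<close> the projection onto \<open>B\<close>, \<open>A = h(\<pi>(M))\<close> is \<open>M\<close>-cyclic too, hence \<open>f\<close>
  extends to an endomorphism \<open>\<phi>\<close>.
  By (C1), \<open>A\<close> is essential in a summand \<open>K\<close>. Essentiality makes \<open>\<phi>\<close> injective on \<open>K\<close> and
  forces \<open>\<phi>(K) \<subseteq> \<phi>(A)\<close>, so \<open>K = A\<close> and \<open>A\<close> is a summand.\<close>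

locale right_mod =
  fixes R :: "('a, 'c) ring_scheme" and M :: "('a, 'm) module"
  assumes right_module: "right_module R M"
begin

sublocale abelian_group M
  using right_module unfolding right_module_def by blast

lemma smult_closed: "r \<in> carrier R \<Longrightarrow> x \<in> carrier M \<Longrightarrow> smult M r x \<in> carrier M"
  using right_module unfolding right_module_def by blast

lemma smult_add: "r \<in> carrier R \<Longrightarrow> x \<in> carrier M \<Longrightarrow> y \<in> carrier M \<Longrightarrow>
    smult M r (x \<oplus>\<^bsub>M\<^esub> y) = smult M r x \<oplus>\<^bsub>M\<^esub> smult M r y"
  using right_module unfolding right_module_def by blast

lemma submodule_subset: "is_submodule R M A \<Longrightarrow> A \<subseteq> carrier M"
  unfolding is_submodule_def by blast

lemma submodule_mem: "is_submodule R M A \<Longrightarrow> x \<in> A \<Longrightarrow> x \<in> carrier M"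
  using submodule_subset by blast

lemma submodule_zero: "is_submodule R M A \<Longrightarrow> \<zero>\<^bsub>M\<^esub> \<in> A"
  unfolding is_submodule_def by blast

lemma submodule_add: "is_submodule R M A \<Longrightarrow> x \<in> A \<Longrightarrow> y \<in> A \<Longrightarrow> x \<oplus>\<^bsub>M\<^esub> y \<in> A"
  unfolding is_submodule_def by blast

lemma submodule_neg: "is_submodule R M A \<Longrightarrow> x \<in> A \<Longrightarrow> \<ominus>\<^bsub>M\<^esub> x \<in> A"
  unfolding is_submodule_def by blast

lemma submodule_smult: "is_submodule R M A \<Longrightarrow> r \<in> carrier R \<Longrightarrow> x \<in> A \<Longrightarrow> smult M r x \<in> A"
  unfolding is_submodule_def by blast

lemma submodule_diff: "is_submodule R M A \<Longrightarrow> x \<in> A \<Longrightarrow> y \<in> A \<Longrightarrow> x \<ominus>\<^bsub>M\<^esub> y \<in> A"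
  by (simp add: minus_eq submodule_add submodule_neg)

lemma submodule_Int: "is_submodule R M A \<Longrightarrow> is_submodule R M B \<Longrightarrow> is_submodule R M (A \<inter> B)"
  unfolding is_submodule_def by auto

lemma submodule_zero_set: "is_submodule R M {\<zero>\<^bsub>M\<^esub>}"
  unfolding is_submodule_def
  by (auto simp: smult_closed) (metis smult_add l_zero zero_closed smult_closed add.r_cancel_one)

lemma submodule_msum:
  assumes A: "is_submodule R M A" and B: "is_submodule R M B"
  shows "is_submodule R M (msum M A B)"
  unfolding is_submodule_def
proof (intro conjI ballI)
  show "msum M A B \<subseteq> carrier M"
    using A B submodule_mem unfolding msum_def by auto
  have "\<zero>\<^bsub>M\<^esub> = \<zero>\<^bsub>M\<^esub> \<oplus>\<^bsub>M\<^esub> \<zero>\<^bsub>M\<^esub>" by simp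
  then show "\<zero>\<^bsub>M\<^esub> \<in> msum M A B"
    using submodule_zero[OF A] submodule_zero[OF B] unfolding msum_def by blast
next
  fix x y assume "x \<in> msum M A B" "y \<in> msum M A B"
  then obtain a b a' b' where ab: "a \<in> A" "b \<in> B" "a' \<in> A" "b' \<in> B"
    and "x = a \<oplus>\<^bsub>M\<^esub> b" "y = a' \<oplus>\<^bsub>M\<^esub> b'"
    unfolding msum_def by blast
  then have "x \<oplus>\<^bsub>M\<^esub> y = (a \<oplus>\<^bsub>M\<^esub> a') \<oplus>\<^bsub>M\<^esub> (b \<oplus>\<^bsub>M\<^esub> b')"
    using A B submodule_mem by (simp add: a_ac)
  then show "x \<oplus>\<^bsub>M\<^esub> y \<in> msum M A B"
    using ab submodule_add[OF A] submodule_add[OF B] unfolding msum_def by blast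
next
  fix x assume "x \<in> msum M A B"
  then obtain a b where ab: "a \<in> A" "b \<in> B" "x = a \<oplus>\<^bsub>M\<^esub> b"
    unfolding msum_def by blast
  then have "\<ominus>\<^bsub>M\<^esub> x = (\<ominus>\<^bsub>M\<^esub> a) \<oplus>\<^bsub>M\<^esub> (\<ominus>\<^bsub>M\<^esub> b)"
    using A B submodule_mem by (simp add: minus_add)
  then show "\<ominus>\<^bsub>M\<^esub> x \<in> msum M A B"
    using ab submodule_neg[OF A] submodule_neg[OF B] unfolding msum_def by blast
next
  fix r x assume r: "r \<in> carrier R" and "x \<in> msum M A B"
  then obtain a b where ab: "a \<in> A" "b \<in> B" "x = a \<oplus>\<^bsub>M\<^esub> b"
    unfolding msum_def by blast
  then have "smult M r x = smult M r a \<oplus>\<^bsub>M\<^esub> smult M r b"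
    using A B submodule_mem r smult_add by metis
  then show "smult M r x \<in> msum M A B"
    using ab r submodule_smult[OF A] submodule_smult[OF B] unfolding msum_def by blast
qed

lemma msum_subset_commute:
  assumes "A \<subseteq> carrier M" "B \<subseteq> carrier M"
  shows "msum M A B \<subseteq> msum M B A"
proof
  fix x assume "x \<in> msum M A B"
  then obtain a b where ab: "a \<in> A" "b \<in> B" "x = a \<oplus>\<^bsub>M\<^esub> b" unfolding msum_def by blast
  then have "x = b \<oplus>\<^bsub>M\<^esub> a" using assms a_comm by blast
  then show "x \<in> msum M B A" using ab unfolding msum_def by blast
qed

lemma msum_commute: "A \<subseteq> carrier M \<Longrightarrow> B \<subseteq> carrier M \<Longrightarrow> msum M A B = msum M B A"
  using msum_subset_commute by blast

lemma msum_decomp_unique: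
  assumes A: "is_submodule R M A" and B: "is_submodule R M B" and AB: "A \<inter> B = {\<zero>\<^bsub>M\<^esub>}"
    and a: "a \<in> A" "a' \<in> A" and b: "b \<in> B" "b' \<in> B"
    and eq: "a \<oplus>\<^bsub>M\<^esub> b = a' \<oplus>\<^bsub>M\<^esub> b'"
  shows "a = a'" and "b = b'"
proof -
  have c: "a \<in> carrier M" "a' \<in> carrier M" "b \<in> carrier M" "b' \<in> carrier M"
    using a b A B submodule_mem by blast+
  have "a \<ominus>\<^bsub>M\<^esub> a' = b' \<ominus>\<^bsub>M\<^esub> b"
    using eq c by (metis a_assoc a_comm a_inv_closed minus_closed minus_eq r_neg1)
  then have "a \<ominus>\<^bsub>M\<^esub> a' \<in> A \<inter> B"
    using submodule_diff[OF A a] submodule_diff[OF B b(2) b(1)] by auto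
  then have "a \<ominus>\<^bsub>M\<^esub> a' = \<zero>\<^bsub>M\<^esub>" using AB by auto
  then show "a = a'" using c by (metis add.inv_solve_right l_zero minus_eq zero_closed)
  then show "b = b'" using eq c by simp
qed

lemma linear_on_closed: "linear_on R M S f \<Longrightarrow> x \<in> S \<Longrightarrow> f x \<in> carrier M"
  unfolding linear_on_def by blast

lemma linear_on_add:
  "linear_on R M S f \<Longrightarrow> x \<in> S \<Longrightarrow> y \<in> S \<Longrightarrow> f (x \<oplus>\<^bsub>M\<^esub> y) = f x \<oplus>\<^bsub>M\<^esub> f y"
  unfolding linear_on_def by blast

lemma linear_on_smult:
  "linear_on R M S f \<Longrightarrow> r \<in> carrier R \<Longrightarrow> x \<in> S \<Longrightarrow> f (smult M r x) = smult M r (f x)"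
  unfolding linear_on_def by blast

lemma linear_on_subset: "linear_on R M S f \<Longrightarrow> T \<subseteq> S \<Longrightarrow> linear_on R M T f"
  unfolding linear_on_def by blast

lemma endomorphism_linear_on: "endomorphism R M f \<Longrightarrow> is_submodule R M S \<Longrightarrow> linear_on R M S f"
  unfolding endomorphism_def using linear_on_subset submodule_subset by blast

lemma endomorphism_comp: "endomorphism R M f \<Longrightarrow> endomorphism R M g \<Longrightarrow> endomorphism R M (f \<circ> g)"
  unfolding endomorphism_def linear_on_def by auto

lemma linear_on_zero:
  assumes f: "linear_on R M S f" and S: "is_submodule R M S"
  shows "f \<zero>\<^bsub>M\<^esub> = \<zero>\<^bsub>M\<^esub>"
proof -
  have z: "\<zero>\<^bsub>M\<^esub> \<in> S" using S submodule_zero by blast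
  then have "f \<zero>\<^bsub>M\<^esub> = f \<zero>\<^bsub>M\<^esub> \<oplus>\<^bsub>M\<^esub> f \<zero>\<^bsub>M\<^esub>"
    using linear_on_add[OF f z z] by simp
  then show ?thesis using linear_on_closed[OF f z] by (metis add.l_cancel_one)
qed

lemma linear_on_neg:
  assumes f: "linear_on R M S f" and S: "is_submodule R M S" and x: "x \<in> S"
  shows "f (\<ominus>\<^bsub>M\<^esub> x) = \<ominus>\<^bsub>M\<^esub> f x"
proof -
  have nx: "\<ominus>\<^bsub>M\<^esub> x \<in> S" using S x submodule_neg by blast
  have "f x \<oplus>\<^bsub>M\<^esub> f (\<ominus>\<^bsub>M\<^esub> x) = \<zero>\<^bsub>M\<^esub>"
    using linear_on_add[OF f x nx] linear_on_zero[OF f S] submodule_mem[OF S x] by (simp add: r_neg)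
  then show ?thesis
    using linear_on_closed[OF f x] linear_on_closed[OF f nx] by (metis add.inv_equality a_comm)
qed

lemma linear_on_diff:
  assumes f: "linear_on R M S f" and S: "is_submodule R M S" and x: "x \<in> S" and y: "y \<in> S"
  shows "f (x \<ominus>\<^bsub>M\<^esub> y) = f x \<ominus>\<^bsub>M\<^esub> f y"
  using linear_on_add[OF f x submodule_neg[OF S y]] linear_on_neg[OF f S y] by (simp add: minus_eq)

lemma submodule_image:
  assumes f: "linear_on R M S f" and S: "is_submodule R M S"
  shows "is_submodule R M (f ` S)"
  unfolding is_submodule_def
proof (intro conjI ballI)
  show "f ` S \<subseteq> carrier M" using linear_on_closed[OF f] by auto
  show "\<zero>\<^bsub>M\<^esub> \<in> f ` S" using linear_on_zero[OF f S] submodule_zero[OF S] by (metis image_eqI)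
next
  fix x y assume "x \<in> f ` S" "y \<in> f ` S"
  then obtain u v where "u \<in> S" "v \<in> S" "x = f u" "y = f v" by blast
  then show "x \<oplus>\<^bsub>M\<^esub> y \<in> f ` S"
    using linear_on_add[OF f] submodule_add[OF S] by (metis image_eqI)
next
  fix x assume "x \<in> f ` S"
  then obtain u where "u \<in> S" "x = f u" by blast
  then show "\<ominus>\<^bsub>M\<^esub> x \<in> f ` S"
    using linear_on_neg[OF f S] submodule_neg[OF S] by (metis image_eqI)
next
  fix r x assume r: "r \<in> carrier R" and "x \<in> f ` S"
  then obtain u where "u \<in> S" "x = f u" by blast
  then show "smult M r x \<in> f ` S"
    using linear_on_smult[OF f r] submodule_smult[OF S r] by (metis image_eqI)
qed

lemma submodule_preimage:
  assumes f: "linear_on R M S f" and S: "is_submodule R M S" and T: "is_submodule R M T"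
  shows "is_submodule R M {x\<in>S. f x \<in> T}"
  unfolding is_submodule_def
proof (intro conjI ballI)
  show "{x\<in>S. f x \<in> T} \<subseteq> carrier M" using S submodule_mem by auto
  show "\<zero>\<^bsub>M\<^esub> \<in> {x\<in>S. f x \<in> T}"
    using linear_on_zero[OF f S] submodule_zero[OF S] submodule_zero[OF T] by auto
next
  fix x y assume "x \<in> {x\<in>S. f x \<in> T}" "y \<in> {x\<in>S. f x \<in> T}"
  then show "x \<oplus>\<^bsub>M\<^esub> y \<in> {x\<in>S. f x \<in> T}"
    using linear_on_add[OF f] submodule_add[OF S] submodule_add[OF T] by auto
next
  fix x assume "x \<in> {x\<in>S. f x \<in> T}"
  then show "\<ominus>\<^bsub>M\<^esub> x \<in> {x\<in>S. f x \<in> T}"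
    using linear_on_neg[OF f S] submodule_neg[OF S] submodule_neg[OF T] by auto
next
  fix r x assume r: "r \<in> carrier R" and "x \<in> {x\<in>S. f x \<in> T}"
  then show "smult M r x \<in> {x\<in>S. f x \<in> T}"
    using linear_on_smult[OF f r] submodule_smult[OF S r] submodule_smult[OF T r] by auto
qed

lemma linear_on_inj_onI:
  assumes f: "linear_on R M S f" and S: "is_submodule R M S"
    and ker: "\<And>x. x \<in> S \<Longrightarrow> f x = \<zero>\<^bsub>M\<^esub> \<Longrightarrow> x = \<zero>\<^bsub>M\<^esub>"
  shows "inj_on f S"
proof (rule inj_onI)
  fix x y assume x: "x \<in> S" and y: "y \<in> S" and e: "f x = f y"
  then have "f (x \<ominus>\<^bsub>M\<^esub> y) = \<zero>\<^bsub>M\<^esub>"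
    using linear_on_diff[OF f S x y] linear_on_closed[OF f y] by (simp add: r_neg minus_eq)
  then have "x \<ominus>\<^bsub>M\<^esub> y = \<zero>\<^bsub>M\<^esub>" using ker submodule_diff[OF S x y] by blast
  then show "x = y"
    using submodule_mem[OF S x] submodule_mem[OF S y]
    by (metis add.inv_solve_right l_zero minus_eq zero_closed)
qed

lemma linear_on_inv_into:
  assumes f: "linear_on R M S f" and S: "is_submodule R M S" and inj: "inj_on f S"
  shows "linear_on R M (f ` S) (inv_into S f)"
  unfolding linear_on_def
proof (intro conjI ballI)
  fix x assume "x \<in> f ` S"
  then show "inv_into S f x \<in> carrier M" using submodule_mem[OF S] inv_into_into by metis
next
  fix x y assume "x \<in> f ` S" "y \<in> f ` S"
  then obtain u v where uv: "u \<in> S" "v \<in> S" "x = f u" "y = f v" by blast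
  then have "x \<oplus>\<^bsub>M\<^esub> y = f (u \<oplus>\<^bsub>M\<^esub> v)" using linear_on_add[OF f] by simp
  then show "inv_into S f (x \<oplus>\<^bsub>M\<^esub> y) = inv_into S f x \<oplus>\<^bsub>M\<^esub> inv_into S f y"
    using uv inj submodule_add[OF S] by (simp add: inv_into_f_f)
next
  fix r x assume r: "r \<in> carrier R" and "x \<in> f ` S"
  then obtain u where uv: "u \<in> S" "x = f u" by blast
  then have "smult M r x = f (smult M r u)" using linear_on_smult[OF f r] by simp
  then show "inv_into S f (smult M r x) = smult M r (inv_into S f x)"
    using uv inj r submodule_smult[OF S] by (simp add: inv_into_f_f)
qed

lemma iso_submodules_image:
  assumes f: "linear_on R M S f" and S: "is_submodule R M S" and inj: "inj_on f S"
  shows "iso_submodules R M (f ` S) S"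
proof -
  have "bij_betw (inv_into S f) (f ` S) S"
    using bij_betw_inv_into inj unfolding bij_betw_def by blast
  then show ?thesis
    using linear_on_inv_into[OF assms] unfolding iso_submodules_def by blast
qed

subsection \<open>Direct sum decompositions and projections\<close>

definition complementary :: "'m set \<Rightarrow> 'm set \<Rightarrow> bool" where
  "complementary A B \<longleftrightarrow> is_submodule R M A \<and> is_submodule R M B \<and> A \<inter> B = {\<zero>\<^bsub>M\<^esub>}
     \<and> msum M A B = carrier M"

lemma direct_summand_iff_complementary: "direct_summand R M A \<longleftrightarrow> (\<exists>B. complementary A B)"
  unfolding direct_summand_def complementary_def by simp

lemma complementary_sym: "complementary A B \<Longrightarrow> complementary B A"
  unfolding complementary_def using msum_commute[OF submodule_subset submodule_subset]
  by (simp add: Int_commute)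

text \<open>The projection onto \<open>A\<close> along \<open>B\<close>; meaningful only when \<open>complementary A B\<close>.\<close>
definition proj :: "'m set \<Rightarrow> 'm set \<Rightarrow> 'm \<Rightarrow> 'm" where
  "proj A B x = (SOME a. a \<in> A \<and> (\<exists>b\<in>B. x = a \<oplus>\<^bsub>M\<^esub> b))"

lemma proj_decomp:
  assumes "complementary A B" and "x \<in> carrier M"
  shows "proj A B x \<in> A \<and> (\<exists>b\<in>B. x = proj A B x \<oplus>\<^bsub>M\<^esub> b)"
proof -
  have "\<exists>a. a \<in> A \<and> (\<exists>b\<in>B. x = a \<oplus>\<^bsub>M\<^esub> b)"
    using assms unfolding complementary_def msum_def by blast
  then show ?thesis unfolding proj_def by (rule someI_ex)
qed

lemma proj_add_eq:
  assumes d: "complementary A B" and a: "a \<in> A" and b: "b \<in> B"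
  shows "proj A B (a \<oplus>\<^bsub>M\<^esub> b) = a"
proof -
  have A: "is_submodule R M A" and B: "is_submodule R M B" and AB: "A \<inter> B = {\<zero>\<^bsub>M\<^esub>}"
    using d unfolding complementary_def by auto
  have "a \<oplus>\<^bsub>M\<^esub> b \<in> carrier M" using a b A B submodule_mem by auto
  then obtain b' where "b' \<in> B" "a \<oplus>\<^bsub>M\<^esub> b = proj A B (a \<oplus>\<^bsub>M\<^esub> b) \<oplus>\<^bsub>M\<^esub> b'"
    and "proj A B (a \<oplus>\<^bsub>M\<^esub> b) \<in> A"
    using proj_decomp[OF d] by blast
  then show ?thesis using msum_decomp_unique(1)[OF A B AB] a b by metis
qed

lemma proj_fst: "complementary A B \<Longrightarrow> a \<in> A \<Longrightarrow> proj A B a = a"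
  using proj_add_eq[of A B a "\<zero>\<^bsub>M\<^esub>"] unfolding complementary_def
  by (metis submodule_zero r_zero submodule_mem)

lemma proj_snd: "complementary A B \<Longrightarrow> b \<in> B \<Longrightarrow> proj A B b = \<zero>\<^bsub>M\<^esub>"
  using proj_add_eq[of A B "\<zero>\<^bsub>M\<^esub>" b] unfolding complementary_def
  by (metis submodule_zero l_zero submodule_mem)

lemma proj_endomorphism:
  assumes d: "complementary A B"
  shows "endomorphism R M (proj A B)"
  unfolding endomorphism_def linear_on_def
proof (intro conjI ballI)
  have A: "is_submodule R M A" and B: "is_submodule R M B"
    using d unfolding complementary_def by auto
  fix x assume x: "x \<in> carrier M"
  then obtain b where a: "proj A B x \<in> A" and b: "b \<in> B" "x = proj A B x \<oplus>\<^bsub>M\<^esub> b"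
    using proj_decomp[OF d] by blast
  show "proj A B x \<in> carrier M" using a A submodule_mem by blast
  {
    fix y assume y: "y \<in> carrier M"
    then obtain b' where a': "proj A B y \<in> A" and b': "b' \<in> B" "y = proj A B y \<oplus>\<^bsub>M\<^esub> b'"
      using proj_decomp[OF d] by blast
    have "(proj A B x \<oplus>\<^bsub>M\<^esub> b) \<oplus>\<^bsub>M\<^esub> (proj A B y \<oplus>\<^bsub>M\<^esub> b')
        = (proj A B x \<oplus>\<^bsub>M\<^esub> proj A B y) \<oplus>\<^bsub>M\<^esub> (b \<oplus>\<^bsub>M\<^esub> b')"
      using a a' b(1) b'(1) A B submodule_mem by (simp add: a_ac)
    then have "x \<oplus>\<^bsub>M\<^esub> y = (proj A B x \<oplus>\<^bsub>M\<^esub> proj A B y) \<oplus>\<^bsub>M\<^esub> (b \<oplus>\<^bsub>M\<^esub> b')"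
      using b(2) b'(2) by simp
    then show "proj A B (x \<oplus>\<^bsub>M\<^esub> y) = proj A B x \<oplus>\<^bsub>M\<^esub> proj A B y"
      using proj_add_eq[OF d submodule_add[OF A a a'] submodule_add[OF B b(1) b'(1)]] by simp
  }
  fix r assume r: "r \<in> carrier R"
  have "smult M r x = smult M r (proj A B x) \<oplus>\<^bsub>M\<^esub> smult M r b"
    using a b A B submodule_mem smult_add r by metis
  then show "proj A B (smult M r x) = smult M r (proj A B x)"
    using proj_add_eq[OF d submodule_smult[OF A r a] submodule_smult[OF B r b(1)]] by simp
qed

lemma proj_image:
  assumes d: "complementary A B"
  shows "proj A B ` carrier M = A"
proof
  show "proj A B ` carrier M \<subseteq> A" using proj_decomp[OF d] by blast
  show "A \<subseteq> proj A B ` carrier M"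
    using proj_fst[OF d] d submodule_mem unfolding complementary_def by (metis image_eqI subsetI)
qed

lemma direct_summand_M_cyclic: "direct_summand R M A \<Longrightarrow> M_cyclic R M A"
  unfolding direct_summand_iff_complementary M_cyclic_def
  using proj_endomorphism proj_image complementary_def by metis

subsection \<open>Condition (C2) implies (C3)\<close>

lemma proj_inj_on_disjoint:
  assumes d: "complementary A A'" and B: "is_submodule R M B" and AB: "A \<inter> B = {\<zero>\<^bsub>M\<^esub>}"
  shows "inj_on (proj A' A) B"
proof (rule linear_on_inj_onI[OF endomorphism_linear_on[OF proj_endomorphism B] B])
  show d': "complementary A' A" using complementary_sym[OF d] .
  fix b assume b: "b \<in> B" and pb: "proj A' A b = \<zero>\<^bsub>M\<^esub>"
  obtain a where a: "a \<in> A" "b = proj A' A b \<oplus>\<^bsub>M\<^esub> a"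
    using proj_decomp[OF d' submodule_mem[OF B b]] by blast
  then have "b = a"
    using pb d submodule_mem[of A a] unfolding complementary_def by simp
  then show "b = \<zero>\<^bsub>M\<^esub>" using a b AB by blast
qed

lemma msum_Int_proj_image_complement:
  assumes d: "complementary A A'" and B: "is_submodule R M B"
    and PC: "proj A' A ` B \<inter> C = {\<zero>\<^bsub>M\<^esub>}"
  shows "msum M A B \<inter> (A' \<inter> C) \<subseteq> {\<zero>\<^bsub>M\<^esub>}"
proof
  have d': "complementary A' A" using complementary_sym[OF d] .
  have A: "is_submodule R M A" using d unfolding complementary_def by blast
  have p: "endomorphism R M (proj A' A)" using proj_endomorphism[OF d'] .
  fix y assume y: "y \<in> msum M A B \<inter> (A' \<inter> C)"
  then obtain a b where ab: "a \<in> A" "b \<in> B" "y = a \<oplus>\<^bsub>M\<^esub> b"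
    unfolding msum_def by blast
  have "y = proj A' A y" using proj_fst[OF d'] y by simp
  also have "\<dots> = proj A' A a \<oplus>\<^bsub>M\<^esub> proj A' A b"
    using ab p submodule_mem[OF A] submodule_mem[OF B] unfolding endomorphism_def
    by (simp add: linear_on_add)
  also have "\<dots> = proj A' A b"
    using proj_snd[OF d' ab(1)] linear_on_closed[OF p[unfolded endomorphism_def]]
      submodule_mem[OF B ab(2)] by simp
  finally have "y \<in> proj A' A ` B \<inter> C" using ab(2) y by blast
  then show "y \<in> {\<zero>\<^bsub>M\<^esub>}" using PC by simp
qed

lemma msum_proj_image_complement:
  assumes d: "complementary A A'" and B: "is_submodule R M B" and C: "is_submodule R M C"
    and PC: "msum M (proj A' A ` B) C = carrier M"
  shows "carrier M \<subseteq> msum M (msum M A B) (A' \<inter> C)"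
proof
  have d': "complementary A' A" using complementary_sym[OF d] .
  have A: "is_submodule R M A" and A': "is_submodule R M A'" and AA': "msum M A A' = carrier M"
    using d unfolding complementary_def by auto
  fix x assume "x \<in> carrier M"
  then obtain a a' where a: "a \<in> A" "a' \<in> A'" "x = a \<oplus>\<^bsub>M\<^esub> a'"
    using AA' unfolding msum_def by blast
  then obtain b c where bc: "b \<in> B" "c \<in> C" "a' = proj A' A b \<oplus>\<^bsub>M\<^esub> c"
    using PC submodule_mem[OF A'] unfolding msum_def by blast
  obtain e where e: "e \<in> A" "b = proj A' A b \<oplus>\<^bsub>M\<^esub> e" and pb: "proj A' A b \<in> A'"
    using proj_decomp[OF d' submodule_mem[OF B bc(1)]] by blast
  have carrier: "a \<in> carrier M" "proj A' A b \<in> carrier M" "c \<in> carrier M" "e \<in> carrier M"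
    using submodule_mem A A' B C a pb bc e by blast+
  have "c = a' \<ominus>\<^bsub>M\<^esub> proj A' A b"
    using bc(3) carrier by (simp add: minus_eq a_assoc a_comm[of _ c] r_neg)
  then have c_mem: "c \<in> A' \<inter> C" using submodule_diff[OF A' a(2) pb] bc(2) by simp
  have "x = a \<oplus>\<^bsub>M\<^esub> (proj A' A b \<oplus>\<^bsub>M\<^esub> c)" using a(3) bc(3) by simp
  also have "\<dots> = ((a \<ominus>\<^bsub>M\<^esub> e) \<oplus>\<^bsub>M\<^esub> (proj A' A b \<oplus>\<^bsub>M\<^esub> e)) \<oplus>\<^bsub>M\<^esub> c"
    using carrier by (metis a_assoc a_lcomm add.inv_solve_right' minus_closed minus_eq)
  also have "proj A' A b \<oplus>\<^bsub>M\<^esub> e = b" using e(2) by simp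
  finally have "x = ((a \<ominus>\<^bsub>M\<^esub> e) \<oplus>\<^bsub>M\<^esub> b) \<oplus>\<^bsub>M\<^esub> c" .
  moreover have "(a \<ominus>\<^bsub>M\<^esub> e) \<oplus>\<^bsub>M\<^esub> b \<in> msum M A B"
    using submodule_diff[OF A a(1) e(1)] bc(1) unfolding msum_def by blast
  ultimately show "x \<in> msum M (msum M A B) (A' \<inter> C)" using c_mem unfolding msum_def by blast
qed

lemma complementary_msum_proj_image:
  assumes d: "complementary A A'" and B: "is_submodule R M B"
    and PC: "complementary (proj A' A ` B) C"
  shows "complementary (msum M A B) (A' \<inter> C)"
proof -
  have A: "is_submodule R M A" and A': "is_submodule R M A'" and C: "is_submodule R M C"
    using d PC unfolding complementary_def by auto
  have S: "is_submodule R M (msum M A B)" and D: "is_submodule R M (A' \<inter> C)"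
    using submodule_msum[OF A B] submodule_Int[OF A' C] .
  have "msum M A B \<inter> (A' \<inter> C) = {\<zero>\<^bsub>M\<^esub>}"
    using msum_Int_proj_image_complement[OF d B] PC submodule_zero[OF S] submodule_zero[OF D]
    unfolding complementary_def by blast
  moreover have "msum M (msum M A B) (A' \<inter> C) = carrier M"
    using msum_proj_image_complement[OF d B C] PC submodule_subset[OF submodule_msum[OF S D]]
    unfolding complementary_def by blast
  ultimately show ?thesis using S D unfolding complementary_def by blast
qed

lemma C2_imp_C3:
  assumes "C2 R M"
  shows "C3 R M"
  unfolding C3_def
proof (intro allI impI, elim conjE)
  fix A B
  assume "direct_summand R M A" and B_summand: "direct_summand R M B" and AB: "A \<inter> B = {\<zero>\<^bsub>M\<^esub>}"
  then obtain A' where d: "complementary A A'" using direct_summand_iff_complementary by blast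
  have B: "is_submodule R M B" using B_summand unfolding direct_summand_def by blast
  have p: "linear_on R M B (proj A' A)"
    using endomorphism_linear_on[OF proj_endomorphism[OF complementary_sym[OF d]] B] .
  have "iso_submodules R M (proj A' A ` B) B"
    using iso_submodules_image[OF p B proj_inj_on_disjoint[OF d B AB]] .
  then have "direct_summand R M (proj A' A ` B)"
    using assms B_summand submodule_image[OF p B] unfolding C2_def by blast
  then obtain C where "complementary (proj A' A ` B) C"
    using direct_summand_iff_complementary by blast
  then show "direct_summand R M (msum M A B)"
    using complementary_msum_proj_image[OF d B] direct_summand_iff_complementary by blast
qed

subsection \<open>Conditions (C1) and quasi-pseudo principal injectivity imply (C2)\<close>

lemma M_cyclic_if_iso_direct_summand:
  assumes qppi: "quasi_pseudo_principally_injective R M"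
    and A: "is_submodule R M A" and B_summand: "direct_summand R M B"
    and iso: "iso_submodules R M A B"
  shows "M_cyclic R M A"
proof -
  obtain f where f: "linear_on R M A f" and bij: "bij_betw f A B"
    using iso unfolding iso_submodules_def by blast
  then have fA: "f ` A = B" and inj: "inj_on f A" unfolding bij_betw_def by auto
  obtain B' where d: "complementary B B'"
    using B_summand direct_summand_iff_complementary by blast
  have "linear_on R M B (inv_into A f)" and "inj_on (inv_into A f) B"
    using linear_on_inv_into[OF f A inj] fA by (auto simp: inj_on_inv_into)
  then obtain h where h: "endomorphism R M h" and h_eq: "\<forall>x\<in>B. h x = inv_into A f x"
    using qppi direct_summand_M_cyclic[OF B_summand]
    unfolding quasi_pseudo_principally_injective_def by blast
  have "(h \<circ> proj B B') ` carrier M = h ` B"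
    by (simp only: image_comp[symmetric] proj_image[OF d])
  also have "\<dots> = inv_into A f ` B" using h_eq by simp
  also have "\<dots> = A" using bij_betw_inv_into[OF bij] unfolding bij_betw_def by simp
  finally show ?thesis
    using A endomorphism_comp[OF h proj_endomorphism[OF d]] unfolding M_cyclic_def by blast
qed

lemma inj_on_if_essential:
  assumes ess: "essential_in R M A K" and f: "linear_on R M K f" and inj: "inj_on f A"
  shows "inj_on f K"
proof -
  have A: "is_submodule R M A" and K: "is_submodule R M K" and AK: "A \<subseteq> K"
    using ess unfolding essential_in_def by auto
  let ?ker = "{x\<in>K. f x \<in> {\<zero>\<^bsub>M\<^esub>}}"
  have "?ker \<inter> A = {\<zero>\<^bsub>M\<^esub>}"
    using inj linear_on_zero[OF f K] submodule_zero[OF A] AK by auto (metis inj_onD)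
  then have "?ker = {\<zero>\<^bsub>M\<^esub>}"
    using ess submodule_preimage[OF f K submodule_zero_set] unfolding essential_in_def by blast
  then show ?thesis by (intro linear_on_inj_onI[OF f K]) blast
qed


lemma image_subset_if_essential_complementary:
  assumes ess: "essential_in R M A K" and f: "linear_on R M K f" and inj: "inj_on f A"
    and d: "complementary (f ` A) B'"
  shows "f ` K \<subseteq> f ` A"
proof
  have A: "is_submodule R M A" and K: "is_submodule R M K" and AK: "A \<subseteq> K"
    using ess unfolding essential_in_def by auto
  have B: "is_submodule R M (f ` A)" and B': "is_submodule R M B'"
    and BB': "f ` A \<inter> B' = {\<zero>\<^bsub>M\<^esub>}" and BB'_sum: "msum M (f ` A) B' = carrier M"
    using d unfolding complementary_def by auto
  have f0: "f \<zero>\<^bsub>M\<^esub> = \<zero>\<^bsub>M\<^esub>" using linear_on_zero[OF f K] .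
  have ker_A: "x = \<zero>\<^bsub>M\<^esub>" if "x \<in> A" "f x \<in> B'" for x
  proof -
    have "f x \<in> f ` A \<inter> B'" using that by blast
    then have "f x = f \<zero>\<^bsub>M\<^esub>" using BB' f0 by simp
    then show ?thesis by (rule inj_onD[OF inj _ that(1) submodule_zero[OF A]])
  qed
  have "{x\<in>K. f x \<in> B'} \<inter> A = {\<zero>\<^bsub>M\<^esub>}"
  proof
    show "{x\<in>K. f x \<in> B'} \<inter> A \<subseteq> {\<zero>\<^bsub>M\<^esub>}" using ker_A by blast
    show "{\<zero>\<^bsub>M\<^esub>} \<subseteq> {x\<in>K. f x \<in> B'} \<inter> A"
      using f0 submodule_zero[OF A] submodule_zero[OF B'] AK by auto
  qed
  then have ker: "{x\<in>K. f x \<in> B'} = {\<zero>\<^bsub>M\<^esub>}"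
    using ess submodule_preimage[OF f K B'] unfolding essential_in_def by blast
  fix y assume "y \<in> f ` K"
  then obtain k where k: "k \<in> K" "y = f k" by blast
  then obtain b c where bc: "b \<in> f ` A" "c \<in> B'" "y = b \<oplus>\<^bsub>M\<^esub> c"
    using BB'_sum linear_on_closed[OF f] unfolding msum_def by blast
  then obtain k' where k': "k' \<in> A" "b = f k'" by blast
  have "f (k \<ominus>\<^bsub>M\<^esub> k') = (b \<oplus>\<^bsub>M\<^esub> c) \<ominus>\<^bsub>M\<^esub> b"
    using linear_on_diff[OF f K k(1)] k' AK k bc by auto
  also have "\<dots> = c"
    using submodule_mem[OF B bc(1)] submodule_mem[OF B' bc(2)]
    by (simp add: minus_eq a_assoc a_comm[of _ c] r_neg)
  finally have fc: "f (k \<ominus>\<^bsub>M\<^esub> k') = c" .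
  then have "k \<ominus>\<^bsub>M\<^esub> k' \<in> {x\<in>K. f x \<in> B'}"
    using bc(2) submodule_diff[OF K k(1)] k'(1) AK by auto
  then have "c = \<zero>\<^bsub>M\<^esub>" using ker f0 fc by auto
  then have "y = b" using bc(3) submodule_mem[OF B bc(1)] by simp
  then show "y \<in> f ` A" using bc(1) by simp
qed

lemma eq_if_essential_image_direct_summand:
  assumes ess: "essential_in R M A K" and f: "linear_on R M K f" and inj: "inj_on f A"
    and summand: "direct_summand R M (f ` A)"
  shows "K = A"
proof -
  obtain B' where "complementary (f ` A) B'"
    using summand direct_summand_iff_complementary by blast
  then have fK: "f ` K \<subseteq> f ` A"
    using image_subset_if_essential_complementary[OF ess f inj] by blast
  have injK: "inj_on f K" using inj_on_if_essential[OF ess f inj] .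
  have AK: "A \<subseteq> K" using ess unfolding essential_in_def by blast
  have "K \<subseteq> A"
  proof
    fix k assume "k \<in> K"
    then show "k \<in> A" using fK inj_on_image_mem_iff[OF injK \<open>k \<in> K\<close> AK] by blast
  qed
  then show ?thesis using AK by blast
qed

lemma C1_QPPI_imp_C2:
  assumes C1: "C1 R M" and qppi: "quasi_pseudo_principally_injective R M"
  shows "C2 R M"
  unfolding C2_def
proof (intro allI impI, elim conjE)
  fix A B
  assume A: "is_submodule R M A" and B_summand: "direct_summand R M B"
    and iso: "iso_submodules R M A B"
  obtain f where f: "linear_on R M A f" and bij: "bij_betw f A B"
    using iso unfolding iso_submodules_def by blast
  obtain \<phi> where \<phi>: "endomorphism R M \<phi>" and \<phi>_eq: "\<forall>x\<in>A. \<phi> x = f x"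
    using qppi M_cyclic_if_iso_direct_summand[OF qppi A B_summand iso] f bij
    unfolding quasi_pseudo_principally_injective_def bij_betw_def by blast
  have \<phi>A: "\<phi> ` A = B" and inj: "inj_on \<phi> A"
    using \<phi>_eq bij inj_on_cong[of A \<phi> f] unfolding bij_betw_def by auto
  obtain K where K_summand: "direct_summand R M K" and ess: "essential_in R M A K"
    using C1 A unfolding C1_def by blast
  have "is_submodule R M K" using ess unfolding essential_in_def by blast
  then have "K = A"
    using eq_if_essential_image_direct_summand[OF ess endomorphism_linear_on[OF \<phi>] inj]
      \<phi>A B_summand by simp
  then show "direct_summand R M A" using K_summand by simp
qed

end

theorem theorem2p8:
  fixes R :: "('a, 'c) ring_scheme" and M :: "('a, 'm) module"
  assumes "right_module R M"
    and "quasi_pseudo_principally_injective R M"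
  shows "continuous_module R M \<longleftrightarrow> quasi_continuous_module R M"
proof -
  interpret right_mod R M by unfold_locales (rule assms(1))
  show ?thesis
    unfolding continuous_module_def quasi_continuous_module_def
    using C1_QPPI_imp_C2 C2_imp_C3 assms(2) by blast
qed

end
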